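(* Let $r\in\mathbb{N}$ and $\eta(r)=11(r+1)^2(2r+3)\binom{2r}{r-1}$. Let $G$ be an $rP_3$-free graph and let $A,B$ be two disjoint stable sets in $G$ such that every vertex in $B$ has at least two neighbours in $A$. Then there exists $S\subseteq A$ with $|S|\leq\eta(r)$ such that every vertex in $B$ has a neighbour in $S$.
   Context: Graphs are finite and simple. $rP_3$ is the disjoint union of $r$ paths on $3$ vertices; a graph is $H$-free if it has no induced subgraph isomorphic to $H$. A stable set is a set of pairwise nonadjacent vertices. *)

theory Defs
  imports Main
begin

definition simple_graph :: "'a set \<Rightarrow> ('a \<Rightarrow> 'a \<Rightarrow> bool) \<Rightarrow> bool" where
  "simple_graph V E \<longleftrightarrow> finite V \<and> (\<forall>x y. E x y \<longrightarrow> x \<in> V \<and> y \<in> V) \<and>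
     (\<forall>x y. E x y \<longrightarrow> E y x) \<and> (\<forall>x. \<not> E x x)"

definition P3_edge :: "nat \<Rightarrow> nat \<Rightarrow> bool" where
  "P3_edge j k \<longleftrightarrow> {j, k} = {0, 1} \<or> {j, k} = {1, 2}"

definition has_induced_rP3 :: "'a set \<Rightarrow> ('a \<Rightarrow> 'a \<Rightarrow> bool) \<Rightarrow> nat \<Rightarrow> bool" where
  "has_induced_rP3 V E r \<longleftrightarrow> (\<exists>f :: nat \<times> nat \<Rightarrow> 'a.
      inj_on f ({0..<r} \<times> {0,1,2}) \<and> f ` ({0..<r} \<times> {0,1,2}) \<subseteq> V \<and>
      (\<forall>p\<in>{0..<r} \<times> {0,1,2}. \<forall>q\<in>{0..<r} \<times> {0,1,2}.
          E (f p) (f q) \<longleftrightarrow> (fst p = fst q \<and> P3_edge (snd p) (snd q))))"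

definition rP3_free :: "'a set \<Rightarrow> ('a \<Rightarrow> 'a \<Rightarrow> bool) \<Rightarrow> nat \<Rightarrow> bool" where
  "rP3_free V E r \<longleftrightarrow> \<not> has_induced_rP3 V E r"

definition stable_set :: "'a set \<Rightarrow> ('a \<Rightarrow> 'a \<Rightarrow> bool) \<Rightarrow> 'a set \<Rightarrow> bool" where
  "stable_set V E S \<longleftrightarrow> S \<subseteq> V \<and> (\<forall>x\<in>S. \<forall>y\<in>S. \<not> E x y)"

definition eta :: "nat \<Rightarrow> nat" where
  "eta r = 11 * (r + 1)^2 * (2 * r + 3) * ((2 * r) choose (r - 1))"

end

theory Submission
  imports Defs
begin

text \<open>A greedy argument gives the stronger bound 2r. Pick a vertex b in B of minimum degree
into A and two of its neighbours a, a'. Remove the neighbourhood of b from A and the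
neighbours of a and a' from B. By the minimality of the degree of b, every remaining vertex
of B still has two neighbours among the remaining vertices of A, so we may recurse. After
r rounds either B has been exhausted, and the at most 2r chosen vertices a, a' dominate B,
or the r cherries a - b - a' form an induced rP3: a later centre is not adjacent to earlier
leaves because it was not removed from B, and an earlier centre is not adjacent to later
leaves because they were not removed from A.\<close>

definition cherry_family ::
    "('a \<Rightarrow> 'a \<Rightarrow> bool) \<Rightarrow> 'a set \<Rightarrow> 'a set \<Rightarrow> nat \<Rightarrow> (nat \<Rightarrow> 'a) \<Rightarrow> (nat \<Rightarrow> 'a) \<Rightarrow> (nat \<Rightarrow> 'a) \<Rightarrow> bool"
  where
  "cherry_family E A B k b p q \<longleftrightarrow> (\<forall>i<k. b i \<in> B \<and> p i \<in> A \<and> q i \<in> A \<and> p i \<noteq> q i \<and>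
     E (p i) (b i) \<and> E (q i) (b i) \<and> (\<forall>j<k. j \<noteq> i \<longrightarrow> \<not> E (p j) (b i) \<and> \<not> E (q j) (b i)))"

lemma card_Diff_le_card_Diff:
  assumes "finite X" "finite Y" "card X \<le> card Y"
  shows "card (X - Y) \<le> card (Y - X)"
proof -
  have "card (X - Y) = card X - card (X \<inter> Y)" "card (Y - X) = card Y - card (X \<inter> Y)"
    using assms by (simp_all add: card_Diff_subset_Int Int_commute)
  then show ?thesis using assms(3) by linarith
qed

lemma card_neighbours_not_neighbours_ge_two:
  assumes "finite A" "card {x\<in>A. E x b0} \<le> card {x\<in>A. E x y}"
    and "a \<in> A" "a' \<in> A" "a \<noteq> a'" "E a b0" "E a' b0" "\<not> E a y" "\<not> E a' y"
  shows "2 \<le> card {x\<in>A. E x y \<and> \<not> E x b0}"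
proof -
  let ?N = "\<lambda>v. {x\<in>A. E x v}"
  have fin: "finite (?N v)" for v
    using assms(1) by simp
  have "{a, a'} \<subseteq> ?N b0 - ?N y"
    using assms by auto
  then have "2 \<le> card (?N b0 - ?N y)"
    using assms(5) fin by (metis card_2_iff card_mono finite_Diff)
  also have "\<dots> \<le> card (?N y - ?N b0)"
    by (intro card_Diff_le_card_Diff fin assms(2))
  also have "?N y - ?N b0 = {x\<in>A. E x y \<and> \<not> E x b0}"
    by auto
  finally show ?thesis .
qed

lemma cherry_family_extend:
  assumes fam: "cherry_family E A' B' k b p q"
    and "A' \<subseteq> {x \<in> A. \<not> E x b0}" "B' \<subseteq> {y \<in> B. \<not> E a y \<and> \<not> E a' y}"
    and "b0 \<in> B" "a \<in> A" "a' \<in> A" "a \<noteq> a'" "E a b0" "E a' b0"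
  shows "cherry_family E A B (Suc k) (b(k := b0)) (p(k := a)) (q(k := a'))"
  using assms unfolding cherry_family_def by (auto simp: less_Suc_eq)

lemma cherry_family_or_small_dominating_set:
  assumes "finite A" "\<forall>y\<in>B. card {x\<in>A. E x y} \<ge> 2"
  shows "(\<exists>b p q. cherry_family E A B k b p q) \<or> (\<exists>S\<subseteq>A. card S \<le> 2 * k \<and> (\<forall>y\<in>B. \<exists>s\<in>S. E s y))"
  using assms
proof (induction k arbitrary: A B)
  case 0
  show ?case by (simp add: cherry_family_def)
next
  case (Suc k A B)
  show ?case
  proof (cases "B = {}")
    case True
    then show ?thesis by auto
  next
    case False
    obtain b0 where b0: "b0 \<in> B" and b0_min: "\<forall>y\<in>B. card {x\<in>A. E x b0} \<le> card {x\<in>A. E x y}"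
      using ex_has_least_nat[of "\<lambda>y. y \<in> B" _ "\<lambda>y. card {x\<in>A. E x y}"] False by blast
    obtain T where "T \<subseteq> {x\<in>A. E x b0}" "card T = 2"
      using Suc.prems(2) b0 by (metis obtain_subset_with_card_n)
    then obtain a a' where aa': "a \<in> A" "a' \<in> A" "a \<noteq> a'" "E a b0" "E a' b0"
      by (auto simp: card_2_iff)
    define A' where "A' = {x\<in>A. \<not> E x b0}"
    define B' where "B' = {y\<in>B. \<not> E a y \<and> \<not> E a' y}"
    have "\<forall>y\<in>B'. card {x\<in>A'. E x y} \<ge> 2"
    proof
      fix y assume "y \<in> B'"
      then have "2 \<le> card {x\<in>A. E x y \<and> \<not> E x b0}"
        using card_neighbours_not_neighbours_ge_two[of A E b0 y a a'] Suc.prems(1) b0_min aa'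
        by (auto simp: B'_def)
      also have "{x\<in>A. E x y \<and> \<not> E x b0} = {x\<in>A'. E x y}"
        by (auto simp: A'_def)
      finally show "card {x\<in>A'. E x y} \<ge> 2" .
    qed
    then have "(\<exists>b p q. cherry_family E A' B' k b p q) \<or>
        (\<exists>S\<subseteq>A'. card S \<le> 2 * k \<and> (\<forall>y\<in>B'. \<exists>s\<in>S. E s y))"
      using Suc.IH Suc.prems(1) by (simp add: A'_def)
    then show ?thesis
    proof (elim disjE exE conjE)
      fix b p q assume "cherry_family E A' B' k b p q"
      then have "cherry_family E A B (Suc k) (b(k := b0)) (p(k := a)) (q(k := a'))"
        using aa' b0 by (intro cherry_family_extend) (auto simp: A'_def B'_def)
      then show ?thesis by blast
    next
      fix S assume S: "S \<subseteq> A'" "card S \<le> 2 * k" "\<forall>y\<in>B'. \<exists>s\<in>S. E s y"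
      have "finite S"
        using S(1) Suc.prems(1) by (auto simp: A'_def intro: finite_subset)
      then have "card (insert a (insert a' S)) \<le> 2 * Suc k"
        using S(2) by (simp add: card_insert_if)
      moreover have "insert a (insert a' S) \<subseteq> A"
        using S(1) aa' by (auto simp: A'_def)
      moreover have "\<forall>y\<in>B. \<exists>s\<in>insert a (insert a' S). E s y"
        using S(3) by (auto simp: B'_def)
      ultimately show ?thesis by blast
    qed
  qed
qed

lemma cherry_family_induced_rP3:
  assumes "simple_graph V E" "stable_set V E A" "stable_set V E B" "A \<inter> B = {}"
    and fam: "cherry_family E A B r b p q"
  shows "has_induced_rP3 V E r"
proof -
  define D where "D = {0..<r} \<times> {0::nat, 1, 2}"
  define f where "f v = (case v of (i, 0) \<Rightarrow> p i | (i, Suc 0) \<Rightarrow> b i | (i, _) \<Rightarrow> q i)" for v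
  have sym: "E x y \<longleftrightarrow> E y x" for x y
    using assms(1) by (auto simp: simple_graph_def)
  have in_A: "p i \<in> A" "q i \<in> A" and in_B: "b i \<in> B" if "i < r" for i
    using fam that by (auto simp: cherry_family_def)
  have edges: "E (p i) (b j) \<longleftrightarrow> i = j" "E (b j) (p i) \<longleftrightarrow> i = j"
      "E (q i) (b j) \<longleftrightarrow> i = j" "E (b j) (q i) \<longleftrightarrow> i = j"
      "\<not> E (p i) (p j)" "\<not> E (p i) (q j)" "\<not> E (q i) (p j)" "\<not> E (q i) (q j)" "\<not> E (b i) (b j)"
    if "i < r" "j < r" for i j
    using fam that assms(2,3) in_A[OF that(1)] in_A[OF that(2)] in_B[OF that(1)] in_B[OF that(2)]
    unfolding cherry_family_def stable_set_def by (metis sym)+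
  have distinct_vertices: "p i \<noteq> b j" "q i \<noteq> b j" "p i \<noteq> q j"
    if "i < r" "j < r" for i j
    using fam that assms(4) in_A[OF that(1)] in_B[OF that(2)] edges[OF that] edges[OF that(2,1)]
    unfolding cherry_family_def by metis+
  have injective_indices: "p i = p j \<longleftrightarrow> i = j" "q i = q j \<longleftrightarrow> i = j" "b i = b j \<longleftrightarrow> i = j"
    if "i < r" "j < r" for i j
    using edges[OF that] edges[OF that(2,1)] fam that unfolding cherry_family_def by metis+
  have positions: "x = 0 \<or> x = 1 \<or> x = 2" if "(i, x) \<in> D" for i x
    using that by (auto simp: D_def)
  have "inj_on f D"
  proof (rule inj_onI)
    fix u v assume "u \<in> D" "v \<in> D" "f u = f v"
    then show "u = v"
      using positions distinct_vertices distinct_vertices[THEN not_sym] injective_indices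
      by (cases u; cases v) (auto simp: D_def f_def)
  qed
  moreover have "f ` D \<subseteq> V"
    using in_A in_B assms(2,3) by (auto simp: D_def f_def stable_set_def)
  moreover have "\<forall>u\<in>D. \<forall>v\<in>D. E (f u) (f v) \<longleftrightarrow> fst u = fst v \<and> P3_edge (snd u) (snd v)"
    using edges by (auto simp: D_def f_def P3_edge_def doubleton_eq_iff)
  ultimately show ?thesis
    unfolding has_induced_rP3_def D_def by blast
qed

lemma double_le_eta: "2 * r \<le> eta r"
proof -
  have "2 * r \<le> 1 * (2 * r + 3)"
    by simp
  also have "\<dots> \<le> 11 * (r + 1)^2 * (2 * r + 3)"
    by (intro mult_le_mono1) simp
  also have "\<dots> \<le> eta r"
    unfolding eta_def by (simp add: Suc_le_eq)
  finally show ?thesis .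
qed

theorem lemma2p5:
  fixes V :: "'a set" and E :: "'a \<Rightarrow> 'a \<Rightarrow> bool" and r :: nat and A B :: "'a set"
  assumes "simple_graph V E"
    and "rP3_free V E r"
    and "stable_set V E A" and "stable_set V E B" and "A \<inter> B = {}"
    and "\<forall>b\<in>B. card {a\<in>A. E a b} \<ge> 2"
  shows "\<exists>S\<subseteq>A. card S \<le> eta r \<and> (\<forall>b\<in>B. \<exists>s\<in>S. E s b)"
proof -
  have "finite A"
    using assms(1,3) finite_subset by (auto simp: simple_graph_def stable_set_def)
  then have "(\<exists>b p q. cherry_family E A B r b p q) \<or>
      (\<exists>S\<subseteq>A. card S \<le> 2 * r \<and> (\<forall>b\<in>B. \<exists>s\<in>S. E s b))"
    using assms(6) by (rule cherry_family_or_small_dominating_set)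
  moreover have "\<not> cherry_family E A B r b p q" for b p q
    using cherry_family_induced_rP3 assms(1-5) by (metis rP3_free_def)
  ultimately obtain S where "S \<subseteq> A" "card S \<le> 2 * r" "\<forall>b\<in>B. \<exists>s\<in>S. E s b"
    by blast
  with double_le_eta[of r] show ?thesis
    by (intro exI[of _ S]) auto
qed

end
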